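(* Let $f\colon S^1\to S^1$ be a homeomorphism of the circle such that the restriction $f|_{\Omega(f)}$ of $f$ to its nonwandering set has the pseudo-orbit tracing property. Then $f$ has a periodic point.
   Context: The nonwandering set $\Omega(f)$ is the set of $x$ such that for every neighborhood $U$ of $x$ there is $n\ge1$ with $f^n(U)\cap U\neq\emptyset$; it is compact and $f$-invariant. For a homeomorphism $g\colon Y\to Y$ of a metric space $(Y,d)$: a bi-infinite sequence $(x_i)_{i\in\mathbb{Z}}$ is a $\delta$-pseudo-orbit if $d(g(x_i),x_{i+1})\le\delta$ for all $i$; it is $\epsilon$-shadowed if there is $x\in Y$ with $d(g^i(x),x_i)\le\epsilon$ for all $i\in\mathbb{Z}$; $g$ has the pseudo-orbit tracing property if for every $\epsilon>0$ there is $\delta>0$ such that every $\delta$-pseudo-orbit can be $\epsilon$-shadowed. *)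

theory Defs
  imports "HOL-Analysis.Analysis"
begin

definition circle :: "complex set" where
  "circle = sphere 0 1"

definition nonwandering :: "'a::topological_space set \<Rightarrow> ('a \<Rightarrow> 'a) \<Rightarrow> 'a set" where
  "nonwandering X f = {x \<in> X. \<forall>U. openin (top_of_set X) U \<and> x \<in> U \<longrightarrow>
                                  (\<exists>n\<ge>1. (f ^^ n) ` U \<inter> U \<noteq> {})}"

definition int_iter :: "'a set \<Rightarrow> ('a \<Rightarrow> 'a) \<Rightarrow> int \<Rightarrow> 'a \<Rightarrow> 'a" where
  "int_iter Y g i x = (if 0 \<le> i then (g ^^ nat i) x else (inv_into Y g ^^ nat (- i)) x)"

definition POTP :: "'a::metric_space set \<Rightarrow> ('a \<Rightarrow> 'a) \<Rightarrow> bool" where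
  "POTP Y g \<longleftrightarrow> (\<forall>\<epsilon>>0. \<exists>\<delta>>0. \<forall>xs :: int \<Rightarrow> 'a.
      (\<forall>i. xs i \<in> Y) \<and> (\<forall>i. dist (g (xs i)) (xs (i + 1)) \<le> \<delta>) \<longrightarrow>
      (\<exists>x\<in>Y. \<forall>i. dist (int_iter Y g i x) (xs i) \<le> \<epsilon>))"

end

theory Submission
  imports Defs
begin

(*
  Parametrise the circle by ee t = exp (i t) and lift f to a continuous
  F : R -> R with f (ee t) = ee (F t).  Since f is injective, F is injective, hence
  strictly monotone.  A decreasing F has a fixed point, giving a fixed point of f;
  otherwise F is increasing and of degree one: F (t + 2 pi m) = F t + 2 pi m.
  In the latter case compactness yields a point x of the (nonempty, invariant)
  nonwandering set with f^N x very close to x.  The periodic sequence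
  x, f x, ..., f^(N-1) x, x, ... is a pseudo-orbit inside the nonwandering set, so it
  is shadowed by the forward orbit of some y.  Lifting, the integer "winding"
  between the orbit of y and the lifted pseudo-orbit cannot jump, so the orbit of a
  lift of y under G = F^N - 2 pi p stays bounded.  G is increasing and continuous,
  so this bounded orbit is monotone and converges to a fixed point of G, which
  projects to a point of period N of f.
*)

section \<open>Parametrising the circle\<close>

definition ee :: "real \<Rightarrow> complex" where "ee t = exp (\<i> * of_real t)"

lemma ee_circle [simp]: "ee t \<in> circle"
  by (simp add: ee_def circle_def norm_exp_i_times)

lemma norm_ee [simp]: "norm (ee t) = 1"
  by (simp add: ee_def norm_exp_i_times)

lemma ee_add: "ee (s + t) = ee s * ee t"
  by (simp add: ee_def distrib_left exp_add)

lemma ee_eq: "ee s = ee t \<longleftrightarrow> (\<exists>m::int. s = t + 2 * pi * m)"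
proof -
  have "\<i> * of_real s = \<i> * of_real t + (of_int (2 * n) * pi) * \<i> \<longleftrightarrow> s = t + 2 * pi * n"
    for n :: int
  proof -
    have "\<i> * of_real s = \<i> * of_real t + (of_int (2 * n) * pi) * \<i> \<longleftrightarrow>
          \<i> * of_real s = \<i> * of_real (t + 2 * pi * n)" by (simp add: algebra_simps)
    also have "\<dots> \<longleftrightarrow> s = t + 2 * pi * n"
      using of_real_eq_iff[of s "t + 2*pi*n", where 'a=complex] by simp
    finally show ?thesis .
  qed
  moreover have "ee s = ee t \<longleftrightarrow>
      (\<exists>n::int. \<i> * of_real s = \<i> * of_real t + (of_int (2 * n) * pi) * \<i>)"
    unfolding ee_def by (rule exp_eq)
  ultimately show ?thesis by simp
qed

lemma ee_shift [simp]: "ee (t + 2 * pi * of_int m) = ee t"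
  using ee_eq by blast

lemma circle_ee: "z \<in> circle \<Longrightarrow> \<exists>t. z = ee t"
proof -
  assume "z \<in> circle"
  then have "norm z = 1" by (simp add: circle_def)
  then have "z \<noteq> 0" by auto
  from Arg_eq[OF this] \<open>norm z = 1\<close> show ?thesis by (auto simp: ee_def)
qed

lemma small_multiple_of_2pi: "\<bar>2 * pi * real_of_int m\<bar> < 2 * pi \<Longrightarrow> m = 0"
proof -
  assume "\<bar>2 * pi * real_of_int m\<bar> < 2 * pi"
  then have "\<bar>real_of_int m\<bar> < 1" using pi_gt_zero by (simp add: abs_mult)
  then show "m = 0" by linarith
qed

lemma no_multiple_of_2pi_between:
  assumes "0 < s - t" "s - t < 2 * pi"
  shows "\<not> (\<exists>m::int. s = t + 2 * pi * m)"
proof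
  assume "\<exists>m::int. s = t + 2 * pi * m"
  then obtain m :: int where "s = t + 2 * pi * m" by blast
  then have "\<bar>2 * pi * real_of_int m\<bar> < 2 * pi" "m \<noteq> 0" using assms by auto
  then show False using small_multiple_of_2pi by blast
qed

lemma ee_close_imp_angle_close:
  assumes "\<eta> > 0"
  obtains \<epsilon> where "\<epsilon> > 0"
    "\<And>s t. norm (ee s - ee t) \<le> \<epsilon> \<Longrightarrow> \<exists>m::int. \<bar>s - t - 2 * pi * m\<bar> \<le> \<eta>"
proof -
  have "(1::complex) \<notin> \<real>\<^sub>\<le>\<^sub>0" by (simp add: nonpos_Reals_def)
  then have "continuous (at 1) Arg" by (rule continuous_at_Arg)
  then obtain d where d: "d > 0" "\<And>z. dist z 1 < d \<Longrightarrow> dist (Arg z) (Arg 1) < \<eta>"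
    using assms unfolding continuous_at_eps_delta by blast
  show thesis
  proof (rule that[of "d/2"])
    show "d/2 > 0" using d by simp
    fix s t assume st: "norm (ee s - ee t) \<le> d/2"
    have "ee s = ee (s - t) * ee t" using ee_add[of "s-t" t] by simp
    then have "norm (ee s - ee t) = norm (ee (s - t) - 1)"
      by (metis mult.commute mult.right_neutral norm_ee norm_mult right_diff_distrib)
    with st d have "dist (ee (s - t)) 1 < d" by (simp add: dist_norm)
    with d have A: "\<bar>Arg (ee (s - t))\<bar> < \<eta>" by (simp add: dist_real_def)
    obtain k where "Im (\<i> * of_real (s - t)) - real_of_int k * (2 * pi) = Arg (ee (s - t))"
      using Arg_exp_diff_2pi unfolding ee_def by blast
    then have "s - t - 2 * pi * k = Arg (ee (s - t))" by (simp add: algebra_simps)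
    with A show "\<exists>m::int. \<bar>s - t - 2 * pi * m\<bar> \<le> \<eta>" by (intro exI[of _ k]) simp
  qed
qed

section \<open>Lifts of circle maps\<close>

lemma lift_exists:
  assumes "continuous_on circle f" "f ` circle \<subseteq> circle"
  obtains F where "continuous_on UNIV F" "\<And>t. f (ee t) = ee (F t)"
proof -
  have ce: "continuous_on UNIV ee" unfolding ee_def by (intro continuous_intros)
  have c: "continuous_on UNIV (f \<circ> ee)"
    using continuous_on_compose[OF ce, of f] assms(1)
    by (simp add: image_subset_iff continuous_on_subset)
  have fee: "f (ee t) \<in> circle" for t using assms(2) ee_circle[of t] by blast
  have nz: "(f \<circ> ee) t \<noteq> 0" for t using fee[of t] by (auto simp: circle_def)
  obtain g where g: "continuous_on UNIV g" "\<And>t. (f \<circ> ee) t = exp (g t)"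
    using continuous_logarithm_on_contractible[OF c convex_imp_contractible[OF convex_UNIV] nz]
    by (metis UNIV_I)
  show ?thesis
  proof (rule that[of "\<lambda>t. Im (g t)"])
    show "continuous_on UNIV (\<lambda>t. Im (g t))" by (intro continuous_intros g)
    fix t
    have "norm (exp (g t)) = 1" using g(2)[of t] fee[of t] by (auto simp: circle_def)
    then have "g t = \<i> * of_real (Im (g t))" by (simp add: complex_eq_iff)
    then show "f (ee t) = ee (Im (g t))" using g(2)[of t] by (simp add: ee_def)
  qed
qed

lemma lift_degree:
  fixes F :: "real \<Rightarrow> real"
  assumes contF: "continuous_on UNIV F" and lift: "\<And>t. f (ee t) = ee (F t)"
  obtains d :: int where "\<And>t. F (t + 2*pi) = F t + 2*pi*d"
proof -
  define h where "h t = (F (t + 2*pi) - F t) / (2*pi)" for t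
  have hint: "h t \<in> \<int>" for t
  proof -
    have "ee (F (t + 2*pi)) = ee (F t)"
      using lift[of "t + 2*pi"] lift[of t] ee_shift[of t 1] by simp
    then obtain m :: int where "F (t + 2*pi) = F t + 2*pi*m" using ee_eq by blast
    then have "h t = m" by (simp add: h_def)
    then show ?thesis by simp
  qed
  have "h constant_on UNIV"
  proof (rule continuous_discrete_range_constant)
    show "continuous_on UNIV h" unfolding h_def
      by (intro continuous_intros continuous_on_compose2[OF contF]) auto
    fix x :: real
    show "\<exists>e>0. \<forall>y. y \<in> UNIV \<and> h y \<noteq> h x \<longrightarrow> e \<le> norm (h y - h x)"
    proof (intro exI[of _ 1] conjI allI impI)
      fix y assume "y \<in> UNIV \<and> h y \<noteq> h x"
      moreover obtain a b :: int where "h y = a" "h x = b" using hint by (metis Ints_cases)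
      ultimately show "1 \<le> norm (h y - h x)" by simp
    qed simp
  qed simp
  then obtain c where "\<And>t. h t = c" by (auto simp: constant_on_def)
  moreover obtain d :: int where "h 0 = d" using hint by (metis Ints_cases)
  ultimately have hd: "h t = d" for t by simp
  have "F (t + 2*pi) = F t + 2*pi*d" for t using hd[of t] by (simp add: h_def field_simps)
  then show thesis by (rule that)
qed

lemma lift_shift:
  fixes F :: "real \<Rightarrow> real"
  assumes step: "\<And>t. F (t + 2*pi) = F t + 2*pi*d"
  shows "F (t + 2*pi* of_int m) = F t + 2*pi* of_int (d*m)"
proof -
  have shn: "F (t + 2*pi*real n) = F t + 2*pi*d*real n" for t n
  proof (induction n)
    case (Suc n)
    have "F (t + 2*pi*real (Suc n)) = F ((t + 2*pi*real n) + 2*pi)" by (simp add: algebra_simps)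
    also have "\<dots> = F (t + 2*pi*real n) + 2*pi*d" by (rule step)
    also have "\<dots> = F t + 2*pi*d*real (Suc n)" using Suc by (simp add: algebra_simps)
    finally show ?case .
  qed simp
  show ?thesis
  proof (cases "m \<ge> 0")
    case True
    then show ?thesis using shn[of t "nat m"] by simp
  next
    case False
    define n where "n = nat (-m)"
    have m: "real_of_int m = - real n" using False by (simp add: n_def)
    have "F t = F ((t + 2*pi* of_int m) + 2*pi*real n)" using m by simp
    also have "\<dots> = F (t + 2*pi* of_int m) + 2*pi*d*real n" by (rule shn)
    finally show ?thesis using m by simp
  qed
qed

lemma lift_fibre:
  assumes lift: "\<And>t. f (ee t) = ee (F t)" and injf: "inj_on f circle"
    and "ee (F s) = ee (F t)"
  shows "\<exists>m::int. s = t + 2*pi*m"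
proof -
  have "f (ee s) = f (ee t)" using assms(3) lift by simp
  then have "ee s = ee t" using injf by (auto dest: inj_onD)
  then show ?thesis using ee_eq by blast
qed

text \<open>The lift of an injective circle map is not periodic: F is injective on
  [0, 2\<pi>), whereas a 2\<pi>-periodic F would take some value twice there.\<close>
lemma lift_degree_nonzero:
  fixes F :: "real \<Rightarrow> real" and d :: int
  assumes contF: "continuous_on UNIV F" and lift: "\<And>t. f (ee t) = ee (F t)"
    and injf: "inj_on f circle" and step: "\<And>t. F (t + 2*pi) = F t + 2*pi*d"
  shows "d \<noteq> 0"
proof
  assume "d = 0"
  then have F2: "F (2*pi) = F 0" using step[of 0] by simp
  have noeq: "F s \<noteq> F t" if "0 < s - t" "s - t < 2*pi" for s t
    using lift_fibre[OF lift injf, of s t] no_multiple_of_2pi_between[OF that] by auto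
  have IV: "\<exists>x. a \<le> x \<and> x \<le> b \<and> F x = y"
    if "a \<le> b" "min (F a) (F b) \<le> y" "y \<le> max (F a) (F b)" for a b y
    using IVT'[of F a y b] IVT2'[of F b y a] that continuous_on_subset[OF contF]
    by (cases "F a \<le> F b") auto
  have "F pi \<noteq> F 0" using noeq[of pi 0] pi_gt_zero by simp
  define v where "v = (F 0 + F pi) / 2"
  have v: "v \<noteq> F 0" "v \<noteq> F pi" "min (F 0) (F pi) \<le> v" "v \<le> max (F 0) (F pi)"
    using \<open>F pi \<noteq> F 0\<close> by (auto simp: v_def)
  obtain s where s: "0 \<le> s" "s \<le> pi" "F s = v"
    using IV[of 0 pi v] pi_gt_zero v by auto
  obtain t where t: "pi \<le> t" "t \<le> 2*pi" "F t = v"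
    using IV[of pi "2*pi" v] pi_gt_zero F2 v by (auto simp: min.commute max.commute)
  have "s \<noteq> 0" "t \<noteq> 2*pi" "s \<noteq> pi" using s t v F2 by auto
  then have "0 < t - s" "t - s < 2*pi" using s t by auto
  then show False using noeq[of t s] s t by simp
qed

text \<open>Since the degree is nonzero, a lift of an injective circle map is injective.\<close>
lemma lift_injective:
  fixes F :: "real \<Rightarrow> real"
  assumes contF: "continuous_on UNIV F" and lift: "\<And>t. f (ee t) = ee (F t)"
    and injf: "inj_on f circle"
  shows "inj F"
proof (rule injI)
  obtain d :: int where step: "\<And>t. F (t + 2*pi) = F t + 2*pi*d"
    using lift_degree[OF contF lift] by blast
  fix s t assume "F s = F t"
  then obtain m :: int where m: "s = t + 2*pi*m" using lift_fibre[OF lift injf] by metis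
  then have "F s = F t + 2*pi* of_int (d*m)" using lift_shift[where F=F, OF step] by simp
  with \<open>F s = F t\<close> have "d * m = 0" by simp
  with lift_degree_nonzero[OF contF lift injf step] have "m = 0" by simp
  with m show "s = t" by simp
qed

lemma antimono_fixed_point:
  fixes F :: "real \<Rightarrow> real"
  assumes contF: "continuous_on UNIV F" and dec: "antimono F"
  shows "\<exists>t. F t = t"
proof -
  define \<psi> where "\<psi> t = t - F t" for t
  have c\<psi>: "continuous_on S \<psi>" for S
    unfolding \<psi>_def by (intro continuous_intros continuous_on_subset[OF contF]) simp
  have "\<exists>t. \<psi> t = 0"
  proof (cases "F 0 \<ge> 0")
    case True
    have "F (F 0) \<le> F 0" using antimonoD[OF dec True] .
    then have "\<psi> 0 \<le> 0" "0 \<le> \<psi> (F 0)" using True by (simp_all add: \<psi>_def)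
    then show ?thesis using IVT'[OF _ _ True c\<psi>] by blast
  next
    case False
    then have "F 0 \<le> 0" by simp
    then have "F 0 \<le> F (F 0)" using antimonoD[OF dec] by blast
    then have "\<psi> (F 0) \<le> 0" "0 \<le> \<psi> 0" using False by (simp_all add: \<psi>_def)
    then show ?thesis using IVT'[OF _ _ \<open>F 0 \<le> 0\<close> c\<psi>] by blast
  qed
  then obtain t where "\<psi> t = 0" by blast
  then have "F t = t" by (simp add: \<psi>_def)
  then show ?thesis by blast
qed

lemma increasing_lift_degree_one:
  fixes F :: "real \<Rightarrow> real" and d :: int
  assumes contF: "continuous_on UNIV F" and lift: "\<And>t. f (ee t) = ee (F t)"
    and injf: "inj_on f circle" and inc: "strict_mono F"
    and step: "\<And>t. F (t + 2*pi) = F t + 2*pi*d"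
  shows "d = 1"
proof (rule ccontr)
  assume "d \<noteq> 1"
  have "F 0 < F (2*pi)" using inc pi_gt_zero by (simp add: strict_mono_less)
  then have "d > 0" using step[of 0] pi_gt_zero by (simp add: zero_less_mult_iff)
  with \<open>d \<noteq> 1\<close> have "2 \<le> d" by presburger
  then have "2 * pi * 2 \<le> 2 * pi * d" using pi_gt_zero by simp
  moreover have "F (2*pi) = F 0 + 2*pi*d" using step[of 0] by simp
  ultimately have "F 0 + 2*pi < F (2*pi)" using pi_gt_zero by linarith
  then obtain t where t: "0 \<le> t" "t \<le> 2*pi" "F t = F 0 + 2*pi"
    using IVT'[of F 0 "F 0 + 2*pi" "2*pi"] continuous_on_subset[OF contF] pi_gt_zero by auto
  have "t \<noteq> 0" "t \<noteq> 2*pi" using t \<open>F 0 + 2*pi < F (2*pi)\<close> pi_gt_zero by auto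
  moreover have "ee (F t) = ee (F 0)" using t ee_shift[of "F 0" 1] by simp
  ultimately show False
    using lift_fibre[OF lift injf, of t 0] no_multiple_of_2pi_between[of t 0] t by auto
qed

lemma lift_fixed_point_or_orientation_preserving:
  fixes F :: "real \<Rightarrow> real"
  assumes contF: "continuous_on UNIV F" and lift: "\<And>t. f (ee t) = ee (F t)"
    and injf: "inj_on f circle"
  shows "(\<exists>t. F t = t) \<or>
         (strict_mono F \<and> (\<forall>t m. F (t + 2*pi* of_int m) = F t + 2*pi* of_int m))"
proof -
  have "strict_mono F \<or> strict_antimono_on UNIV F"
    using injective_eq_monotone_map[of UNIV F] contF lift_injective[OF contF lift injf] by simp
  then show ?thesis
  proof
    assume inc: "strict_mono F"
    obtain d :: int where step: "\<And>t. F (t + 2*pi) = F t + 2*pi*d"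
      using lift_degree[OF contF lift] by blast
    have "d = 1" by (rule increasing_lift_degree_one[where f=f and F=F, OF contF lift injf inc step])
    then show ?thesis using inc lift_shift[where F=F, OF step] by simp
  next
    assume "strict_antimono_on UNIV F"
    then have "antimono F" by (simp add: strict_antimono_iff_antimono)
    then show ?thesis using antimono_fixed_point[OF contF] by blast
  qed
qed

text \<open>A continuous degree-one lift is uniformly continuous, since it is determined by
  its values on a compact interval.\<close>
lemma degree_one_lift_uniformly_continuous:
  fixes F :: "real \<Rightarrow> real"
  assumes contF: "continuous_on UNIV F"
    and sh: "\<And>t m. F (t + 2 * pi * of_int m) = F t + 2 * pi * of_int m"
    and e: "e > 0"
  obtains \<eta> where "\<eta> > 0" "\<And>a b. \<bar>a - b\<bar> \<le> \<eta> \<Longrightarrow> \<bar>F a - F b\<bar> \<le> e"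
proof -
  have "uniformly_continuous_on {-2*pi..4*pi} F"
    by (rule compact_uniformly_continuous) (use contF continuous_on_subset in auto)
  then obtain d where d: "d > 0"
    "\<And>x x'. x \<in> {-2*pi..4*pi} \<Longrightarrow> x' \<in> {-2*pi..4*pi} \<Longrightarrow> dist x' x < d \<Longrightarrow>
       dist (F x') (F x) < e"
    using e unfolding uniformly_continuous_on_def by metis
  show thesis
  proof (rule that[of "min (d/2) 1"])
    show "min (d/2) 1 > 0" using d by simp
    fix a b assume ab: "\<bar>a - b\<bar> \<le> min (d/2) 1"
    define m where "m = \<lfloor>a / (2*pi)\<rfloor>"
    have "real_of_int m \<le> a / (2*pi)" "a / (2*pi) < real_of_int m + 1"
      unfolding m_def by (rule of_int_floor_le, rule real_of_int_floor_add_one_gt)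
    then have "2 * pi * real_of_int m \<le> a" "a < 2 * pi * real_of_int m + 2 * pi"
      using pi_gt_zero by (simp_all add: field_simps)
    define a0 where "a0 = a - 2 * pi * of_int m"
    define b0 where "b0 = b - 2 * pi * of_int m"
    have a0r: "0 \<le> a0" "a0 < 2 * pi" using \<open>2 * pi * real_of_int m \<le> a\<close>
        \<open>a < 2 * pi * real_of_int m + 2 * pi\<close> by (auto simp: a0_def)
    have "\<bar>a0 - b0\<bar> \<le> 1" "\<bar>a0 - b0\<bar> < d" using ab d by (auto simp: a0_def b0_def)
    then have "a0 \<in> {-2*pi..4*pi}" "b0 \<in> {-2*pi..4*pi}" using a0r pi_gt_zero pi_gt3
      by (auto simp: abs_le_iff)
    then have "dist (F a0) (F b0) < e" using d(2)[of b0 a0] \<open>\<bar>a0 - b0\<bar> < d\<close>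
      by (simp add: dist_real_def abs_minus_commute)
    moreover have "F a = F a0 + 2 * pi * of_int m" "F b = F b0 + 2 * pi * of_int m"
      using sh[of a0 m] sh[of b0 m] by (simp_all add: a0_def b0_def)
    ultimately show "\<bar>F a - F b\<bar> \<le> e" by (simp add: dist_real_def)
  qed
qed

lemma lift_funpow: "(\<And>t. f (ee t) = ee (F t)) \<Longrightarrow> (f^^n) (ee t) = ee ((F^^n) t)"
  by (induction n) auto

lemma funpow_shift:
  assumes "\<And>t m. F (t + 2 * pi * of_int m) = F t + 2 * pi * of_int m"
  shows "(F^^n) (t + 2 * pi * of_int m) = (F^^n) t + 2 * pi * of_int m"
  by (induction n) (auto simp: assms)

lemma funpow_strict_mono:
  fixes F :: "real \<Rightarrow> real"
  assumes "strict_mono F"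
  shows "strict_mono (F^^n)"
  by (induction n) (use assms in \<open>auto simp: strict_mono_def\<close>)

lemma funpow_continuous:
  fixes F :: "real \<Rightarrow> real"
  assumes "continuous_on UNIV F"
  shows "continuous_on UNIV (F^^n)"
proof (induction n)
  case 0
  show ?case by (simp add: continuous_on_id id_def[symmetric])
next
  case (Suc n)
  then show ?case using continuous_on_compose[OF Suc, of F] assms
    by (simp add: continuous_on_subset)
qed

section \<open>Dynamics of monotone maps of the line\<close>

text \<open>A bounded orbit of a continuous nondecreasing map of the line is monotone,
  hence converges, and its limit is a fixed point.\<close>
lemma mono_bounded_orbit_fixed_point:
  fixes G :: "real \<Rightarrow> real"
  assumes contG: "continuous_on UNIV G" and monoG: "mono G"
    and bounded: "\<And>j. (G^^j) a \<in> {lo..hi}"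
  shows "\<exists>L. G L = L"
proof -
  define sq where "sq j = (G^^j) a" for j
  have "monoseq sq"
  proof (cases "a \<le> G a")
    case True
    have "sq j \<le> sq (Suc j)" for j
      by (induction j) (use True monoG in \<open>auto simp: sq_def dest: monoD\<close>)
    then show ?thesis by (simp add: monoseq_iff incseq_SucI)
  next
    case False
    have "sq (Suc j) \<le> sq j" for j
      by (induction j) (use False monoG in \<open>auto simp: sq_def dest: monoD\<close>)
    then show ?thesis by (simp add: monoseq_iff decseq_SucI)
  qed
  moreover have "Bseq sq"
  proof (rule BseqI'[where K="max \<bar>lo\<bar> \<bar>hi\<bar>"])
    fix j show "norm (sq j) \<le> max \<bar>lo\<bar> \<bar>hi\<bar>" using bounded[of j] by (auto simp: sq_def)
  qed
  ultimately obtain L where L: "sq \<longlonglongrightarrow> L"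
    using Bseq_monoseq_convergent by (auto simp: convergent_def)
  have "isCont G L" using contG by (simp add: continuous_on_eq_continuous_at)
  then have "(\<lambda>j. G (sq j)) \<longlonglongrightarrow> G L" using L by (rule isCont_tendsto_compose)
  then have "(\<lambda>j. sq (Suc j)) \<longlonglongrightarrow> G L" by (simp add: sq_def)
  moreover have "(\<lambda>j. sq (Suc j)) \<longlonglongrightarrow> L" using L by (rule LIMSEQ_Suc)
  ultimately show ?thesis using LIMSEQ_unique by blast
qed

lemma bounded_corrected_orbit_fixed_point:
  fixes F :: "real \<Rightarrow> real"
  assumes contF: "continuous_on UNIV F" and inc: "strict_mono F"
    and shF: "\<And>t m. F (t + 2 * pi * of_int m) = F t + 2 * pi * of_int m"
    and bounded: "\<And>j. \<bar>(F^^(j * N)) Y - 2 * pi * of_int (p * int j) - c\<bar> \<le> r"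
  shows "\<exists>L. (F^^N) L = L + 2 * pi * of_int p"
proof -
  define G where "G t = (F^^N) t - 2 * pi * of_int p" for t
  have Gj: "(G^^j) Y = (F^^(j * N)) Y + 2 * pi * of_int (- (p * int j))" for j
  proof (induction j)
    case (Suc j)
    have "(G^^Suc j) Y = (F^^N) ((F^^(j * N)) Y + 2 * pi * of_int (- (p * int j))) - 2 * pi * p"
      by (simp only: funpow.simps o_apply Suc G_def)
    also have "\<dots> = (F^^N) ((F^^(j * N)) Y) + 2 * pi * of_int (- (p * int j)) - 2 * pi * p"
      by (simp only: funpow_shift[where F=F, OF shF])
    also have "(F^^N) ((F^^(j * N)) Y) = (F^^(Suc j * N)) Y"
      by (simp add: funpow_add add.commute)
    finally show ?case by (simp add: algebra_simps)
  qed simp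
  have "continuous_on UNIV G"
    unfolding G_def by (intro continuous_intros funpow_continuous[OF contF])
  moreover have "mono G"
    using funpow_strict_mono[OF inc, of N] by (auto simp: G_def mono_def strict_mono_less_eq)
  moreover have "(G^^j) Y \<in> {c - r..c + r}" for j
    using bounded[of j] by (simp add: Gj abs_le_iff)
  ultimately obtain L where "G L = L" by (metis mono_bounded_orbit_fixed_point)
  then have "(F^^N) L = L + 2 * pi * of_int p" by (simp add: G_def diff_eq_eq)
  then show ?thesis by blast
qed

section \<open>Winding of shadowing orbits\<close>

text \<open>Lifting a periodic pseudo-orbit of length N which closes up after turning p times
  around the circle: the lifted cycle is repeated with a shift of 2\<pi> p each round.\<close>
definition lifted_cycle :: "(real \<Rightarrow> real) \<Rightarrow> nat \<Rightarrow> int \<Rightarrow> real \<Rightarrow> nat \<Rightarrow> real" where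
  "lifted_cycle F N p X j = (F^^(j mod N)) X + 2 * pi * of_int (p * int (j div N))"

lemma lifted_cycle_pseudo_orbit:
  fixes F :: "real \<Rightarrow> real"
  assumes shF: "\<And>t m. F (t + 2 * pi * of_int m) = F t + 2 * pi * of_int m"
    and ret: "\<bar>(F^^N) X - X - 2 * pi * p\<bar> \<le> \<eta>" and "\<eta> \<ge> 0"
  shows "\<bar>F (lifted_cycle F N p X j) - lifted_cycle F N p X (Suc j)\<bar> \<le> \<eta>"
proof -
  have FW: "F (lifted_cycle F N p X j) =
      F ((F^^(j mod N)) X) + 2 * pi * of_int (p * int (j div N))"
    unfolding lifted_cycle_def by (rule shF)
  show ?thesis
  proof (cases "Suc (j mod N) = N")
    case True
    then have "Suc j mod N = 0" "Suc j div N = Suc (j div N)" by (simp_all add: mod_Suc div_Suc)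
    moreover have "F ((F^^(j mod N)) X) = (F^^N) X" using True by (metis funpow.simps(2) o_apply)
    ultimately show ?thesis using ret FW by (simp add: lifted_cycle_def algebra_simps)
  next
    case False
    then have "Suc j mod N = Suc (j mod N)" "Suc j div N = j div N"
      by (simp_all add: mod_Suc div_Suc)
    then show ?thesis using FW \<open>\<eta> \<ge> 0\<close> by (simp add: lifted_cycle_def)
  qed
qed

text \<open>The winding integer cannot jump.  Let Z be an orbit of a lift F and W a lifted
  pseudo-orbit, such that Z j and W j are close modulo 2\<pi> for every j.  If they
  are close up to the shift 2\<pi> k at time 0, then they are so at all times, because a
  change of the shift would need a jump of at least 2\<pi> in one step.\<close>
lemma winding_constant:
  fixes F :: "real \<Rightarrow> real" and Z W :: "nat \<Rightarrow> real" and k :: int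
  assumes shF: "\<And>t m. F (t + 2 * pi * of_int m) = F t + 2 * pi * of_int m"
    and unif: "\<And>a b. \<bar>a - b\<bar> \<le> \<eta> \<Longrightarrow> \<bar>F a - F b\<bar> \<le> pi/2"
    and small: "\<eta>0 \<le> \<eta>" "\<eta>0 \<le> pi/4"
    and orbit: "\<And>j. Z (Suc j) = F (Z j)"
    and pseudo: "\<And>j. \<bar>F (W j) - W (Suc j)\<bar> \<le> \<eta>0"
    and near: "\<And>j. \<exists>m::int. \<bar>Z j - W j - 2 * pi * m\<bar> \<le> \<eta>0"
    and start: "\<bar>Z 0 - W 0 - 2 * pi * k\<bar> \<le> \<eta>0"
  shows "\<bar>Z j - W j - 2 * pi * k\<bar> \<le> \<eta>0"
proof (induction j)
  case (Suc j)
  have FZ: "F (Z j) = F (Z j - 2 * pi * k) + 2 * pi * k"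
    using shF[of "Z j - 2 * pi * k" k] by simp
  have "\<bar>(Z j - 2 * pi * k) - W j\<bar> \<le> \<eta>" using Suc small by simp
  then have step: "\<bar>F (Z j - 2 * pi * k) - F (W j)\<bar> \<le> pi/2" by (rule unif)
  obtain k' :: int where k': "\<bar>Z (Suc j) - W (Suc j) - 2 * pi * k'\<bar> \<le> \<eta>0"
    using near by blast
  have "\<bar>2 * pi * real_of_int k' - 2 * pi * real_of_int k\<bar> \<le> pi/2 + 2 * \<eta>0"
    using k' step FZ pseudo[of j] orbit[of j] unfolding abs_le_iff by linarith
  also have "\<dots> < 2 * pi" using small pi_gt_zero by linarith
  finally have "\<bar>2 * pi * real_of_int (k' - k)\<bar> < 2 * pi" by (simp add: right_diff_distrib)
  then have "k' = k" using small_multiple_of_2pi[of "k' - k"] by simp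
  then show ?case using k' by simp
qed (rule start)

lemma shadowed_almost_return_periodic_point:
  fixes F :: "real \<Rightarrow> real" and f :: "complex \<Rightarrow> complex"
  assumes contF: "continuous_on UNIV F" and inc: "strict_mono F"
    and shF: "\<And>t m. F (t + 2 * pi * of_int m) = F t + 2 * pi * of_int m"
    and lift: "\<And>t. f (ee t) = ee (F t)"
  obtains \<epsilon> where "\<epsilon> > 0"
    "\<And>x y N. x \<in> circle \<Longrightarrow> y \<in> circle \<Longrightarrow> N \<ge> 1 \<Longrightarrow> dist ((f^^N) x) x \<le> \<epsilon> \<Longrightarrow>
       \<forall>k. dist ((f^^k) y) ((f^^(k mod N)) x) \<le> \<epsilon> \<Longrightarrow> \<exists>z\<in>circle. (f^^N) z = z"
proof -
  obtain \<eta> where \<eta>: "\<eta> > 0" "\<And>a b. \<bar>a - b\<bar> \<le> \<eta> \<Longrightarrow> \<bar>F a - F b\<bar> \<le> pi/2"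
    using degree_one_lift_uniformly_continuous[OF contF shF, of "pi/2"] pi_gt_zero by auto
  define \<eta>0 where "\<eta>0 = min \<eta> (pi/4)"
  have \<eta>0: "\<eta>0 > 0" "\<eta>0 \<le> \<eta>" "\<eta>0 \<le> pi/4" using \<eta> pi_gt_zero by (auto simp: \<eta>0_def)
  obtain \<epsilon> where \<epsilon>: "\<epsilon> > 0"
    "\<And>s t. norm (ee s - ee t) \<le> \<epsilon> \<Longrightarrow> \<exists>m::int. \<bar>s - t - 2 * pi * m\<bar> \<le> \<eta>0"
    using ee_close_imp_angle_close[OF \<eta>0(1)] by blast
  have liftN: "(f^^j) (ee t) = ee ((F^^j) t)" for j t by (rule lift_funpow[where f=f and F=F, OF lift])
  have "\<exists>z\<in>circle. (f^^N) z = z"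
    if x: "x \<in> circle" and y: "y \<in> circle" and N: "N \<ge> 1" and ret: "dist ((f^^N) x) x \<le> \<epsilon>"
      and shadow: "\<forall>k. dist ((f^^k) y) ((f^^(k mod N)) x) \<le> \<epsilon>" for x y N
  proof -
    obtain X Y where X: "x = ee X" and Y: "y = ee Y" using circle_ee x y by blast
    have "norm (ee ((F^^N) X) - ee X) \<le> \<epsilon>" using ret liftN[of N X] X by (simp add: dist_norm)
    then obtain p :: int where p: "\<bar>(F^^N) X - X - 2 * pi * p\<bar> \<le> \<eta>0" using \<epsilon>(2) by blast
    define W where "W = lifted_cycle F N p X"
    have eeW: "ee (W j) = (f^^(j mod N)) x" for j
    proof -
      have "ee (W j) = ee ((F^^(j mod N)) X)" unfolding W_def lifted_cycle_def by (rule ee_shift)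
      then show ?thesis using liftN X by simp
    qed
    have "norm (ee ((F^^j) Y) - ee (W j)) \<le> \<epsilon>" for j
      using shadow[rule_format, of j] liftN[of j Y] Y eeW[of j] by (simp add: dist_norm)
    then have near: "\<exists>m::int. \<bar>(F^^j) Y - W j - 2 * pi * m\<bar> \<le> \<eta>0" for j
      using \<epsilon>(2) by blast
    then obtain k :: int where "\<bar>(F^^0) Y - W 0 - 2 * pi * k\<bar> \<le> \<eta>0" by blast
    then have "\<bar>(F^^j) Y - W j - 2 * pi * k\<bar> \<le> \<eta>0" for j
      using winding_constant[OF shF \<eta>(2) \<eta>0(2,3), of "\<lambda>j. (F^^j) Y" W] near
        lifted_cycle_pseudo_orbit[OF shF p] \<eta>0(1) by (simp add: W_def)
    moreover have "W (j * N) = X + 2 * pi * of_int (p * int j)" for j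
      using N by (simp add: W_def lifted_cycle_def)
    ultimately have "\<bar>(F^^(j * N)) Y - 2 * pi * of_int (p * int j) - (X + 2 * pi * k)\<bar> \<le> \<eta>0"
      for j by (metis diff_diff_eq add.commute)
    then obtain L where "(F^^N) L = L + 2 * pi * of_int p"
      using bounded_corrected_orbit_fixed_point[OF contF inc shF] by blast
    then show ?thesis using liftN[of N L] by (intro bexI[of _ "ee L"]) auto
  qed
  with \<epsilon>(1) show thesis by (rule that)
qed

section \<open>Nonwandering sets and almost returns\<close>

lemma funpow_in_invariant: "f ` X \<subseteq> X \<Longrightarrow> x \<in> X \<Longrightarrow> (f^^n) x \<in> X"
  by (induction n) auto

lemma nonwandering_subset: "nonwandering X f \<subseteq> X"
  by (auto simp: nonwandering_def)

lemma orbit_convergent_subsequence: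
  fixes f :: "'a::metric_space \<Rightarrow> 'a"
  assumes "compact X" "f ` X \<subseteq> X" "x \<in> X"
  obtains r z where "strict_mono r" "z \<in> X" "(\<lambda>j. (f^^(r j)) x) \<longlonglongrightarrow> z"
proof -
  have "\<And>n. (f^^n) x \<in> X" using funpow_in_invariant[OF assms(2,3)] by blast
  then obtain z r where "z \<in> X" "strict_mono r" "((\<lambda>n. (f^^n) x) \<circ> r) \<longlonglongrightarrow> z"
    using compact_imp_seq_compact[OF assms(1)] unfolding seq_compact_def by metis
  then show thesis using that by (auto simp: o_def)
qed

lemma orbit_limit_nonwandering:
  assumes "f ` X \<subseteq> X" "x \<in> X" "z \<in> X" "strict_mono r"
    and lim: "(\<lambda>j. (f^^(r j)) x) \<longlonglongrightarrow> z"
  shows "z \<in> nonwandering X f"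
  unfolding nonwandering_def
proof (intro CollectI conjI allI impI \<open>z \<in> X\<close>)
  fix U assume U: "openin (top_of_set X) U \<and> z \<in> U"
  then obtain V where V: "open V" "U = X \<inter> V" by (auto simp: openin_open)
  then have "eventually (\<lambda>j. (f^^(r j)) x \<in> V) sequentially"
    using U lim by (auto simp: tendsto_def)
  then obtain J where J: "\<And>j. j \<ge> J \<Longrightarrow> (f^^(r j)) x \<in> U"
    using V(2) funpow_in_invariant[OF assms(1,2)] by (auto simp: eventually_sequentially)
  define n where "n = r (Suc J) - r J"
  have lt: "r J < r (Suc J)" using \<open>strict_mono r\<close> by (simp add: strict_mono_def)
  then have "(f^^n) ((f^^(r J)) x) = (f^^(r (Suc J))) x"
    by (simp add: n_def flip: funpow_add[THEN fun_cong, unfolded o_apply])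
  then have "(f^^(r (Suc J))) x \<in> (f^^n) ` U \<inter> U" using J[of J] J[of "Suc J"]
    by (metis IntI image_eqI le_SucI order_refl)
  moreover have "n \<ge> 1" using lt by (simp add: n_def)
  ultimately show "\<exists>n\<ge>1. (f^^n) ` U \<inter> U \<noteq> {}" by blast
qed

lemma nonwandering_nonempty:
  fixes f :: "'a::metric_space \<Rightarrow> 'a"
  assumes "compact X" "f ` X \<subseteq> X" "X \<noteq> {}"
  shows "nonwandering X f \<noteq> {}"
proof -
  obtain x where "x \<in> X" using assms(3) by blast
  then obtain r z where "strict_mono r" "z \<in> X" "(\<lambda>j. (f^^(r j)) x) \<longlonglongrightarrow> z"
    using orbit_convergent_subsequence[OF assms(1,2)] by blast
  then show ?thesis using orbit_limit_nonwandering[OF assms(2) \<open>x \<in> X\<close>] by blast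
qed

lemma nonwandering_invariant:
  assumes contf: "continuous_on X f" and fX: "f ` X \<subseteq> X"
  shows "f ` nonwandering X f \<subseteq> nonwandering X f"
proof (intro image_subsetI)
  fix x assume x: "x \<in> nonwandering X f"
  show "f x \<in> nonwandering X f"
    unfolding nonwandering_def
  proof (intro CollectI conjI allI impI)
    show "f x \<in> X" using x fX by (auto simp: nonwandering_def)
    fix U assume U: "openin (top_of_set X) U \<and> f x \<in> U"
    define V where "V = X \<inter> f -` U"
    have "openin (top_of_set X) V"
      using continuous_on_open_gen[of f X X] fX contf U unfolding V_def
      by (auto simp: image_subset_iff_funcset)
    moreover have "x \<in> V" using x U by (simp add: V_def nonwandering_def)
    ultimately obtain n where n: "n \<ge> 1" "(f^^n) ` V \<inter> V \<noteq> {}"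
      using x unfolding nonwandering_def by blast
    then obtain w where w: "w \<in> V" "(f^^n) w \<in> V" by blast
    then have "f w \<in> U" "(f^^n) (f w) \<in> U" by (auto simp: V_def funpow_swap1)
    then have "(f^^n) (f w) \<in> (f^^n) ` U \<inter> U" by blast
    then show "\<exists>n\<ge>1. (f^^n) ` U \<inter> U \<noteq> {}" using n(1) by blast
  qed
qed

lemma almost_return:
  fixes f :: "'a::metric_space \<Rightarrow> 'a"
  assumes "compact X" "f ` X \<subseteq> X" "Y \<subseteq> X" "f ` Y \<subseteq> Y" "Y \<noteq> {}" "\<delta> > 0"
  obtains x N where "x \<in> Y" "N \<ge> 1" "dist ((f^^N) x) x < \<delta>"
proof -
  obtain x0 where "x0 \<in> Y" using assms(5) by blast
  then obtain r z where r: "strict_mono r" "(\<lambda>j. (f^^(r j)) x0) \<longlonglongrightarrow> z"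
    using orbit_convergent_subsequence[OF assms(1,2)] assms(3) by blast
  have "Cauchy (\<lambda>j. (f^^(r j)) x0)" using r(2) by (rule LIMSEQ_imp_Cauchy)
  then obtain M where M: "\<And>m n. m \<ge> M \<Longrightarrow> n \<ge> M \<Longrightarrow>
      dist ((f^^(r m)) x0) ((f^^(r n)) x0) < \<delta>"
    using assms(6) unfolding Cauchy_def by meson
  define N where "N = r (Suc M) - r M"
  have lt: "r M < r (Suc M)" using r(1) by (simp add: strict_mono_def)
  then have "(f^^N) ((f^^(r M)) x0) = (f^^(r (Suc M))) x0"
    by (simp add: N_def flip: funpow_add[THEN fun_cong, unfolded o_apply])
  then have "dist ((f^^N) ((f^^(r M)) x0)) ((f^^(r M)) x0) < \<delta>" using M by simp
  moreover have "N \<ge> 1" using lt by (simp add: N_def)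
  moreover have "(f^^(r M)) x0 \<in> Y" using funpow_in_invariant[OF assms(4) \<open>x0 \<in> Y\<close>] .
  ultimately show thesis using that by blast
qed

section \<open>Pseudo-orbits\<close>

lemma periodic_pseudo_orbit:
  assumes "N \<ge> 1" "dist ((f^^N) x) x \<le> \<delta>"
  shows "dist (f ((f^^nat (i mod int N)) x)) ((f^^nat ((i + 1) mod int N)) x) \<le> \<delta>"
proof -
  define k where "k = nat (i mod int N)"
  have "0 \<le> \<delta>" using assms(2) by (meson order_trans zero_le_dist)
  have "0 \<le> i mod int N" "i mod int N < int N" using assms(1) by simp_all
  then have "k < N" "int k = i mod int N" by (simp_all add: k_def nat_less_iff)
  then have "(i + 1) mod int N = (int k + 1) mod int N" by (simp add: mod_add_left_eq)
  also have "\<dots> = int (Suc k mod N)" by (simp only: of_nat_mod of_nat_Suc add.commute)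
  finally have succ: "nat ((i + 1) mod int N) = Suc k mod N" by simp
  show ?thesis
  proof (cases "Suc k = N")
    case True
    then have "f ((f^^k) x) = (f^^N) x" by (metis funpow.simps(2) o_apply)
    then show ?thesis using True assms(2) by (simp add: succ flip: k_def)
  next
    case False
    then show ?thesis using \<open>k < N\<close> \<open>0 \<le> \<delta>\<close> by (simp add: succ flip: k_def)
  qed
qed

lemma POTP_shadows_almost_returns:
  assumes potp: "POTP Y f" and fY: "f ` Y \<subseteq> Y" and "\<epsilon> > 0"
  obtains \<delta> where "\<delta> > 0"
    "\<And>x N. x \<in> Y \<Longrightarrow> N \<ge> 1 \<Longrightarrow> dist ((f^^N) x) x \<le> \<delta> \<Longrightarrow>
       \<exists>y\<in>Y. \<forall>k. dist ((f^^k) y) ((f^^(k mod N)) x) \<le> \<epsilon>"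
proof -
  obtain \<delta> where \<delta>: "\<delta> > 0" "\<And>xs. (\<forall>i. xs i \<in> Y) \<and> (\<forall>i. dist (f (xs i)) (xs (i + 1)) \<le> \<delta>)
      \<Longrightarrow> (\<exists>y\<in>Y. \<forall>i. dist (int_iter Y f i y) (xs i) \<le> \<epsilon>)"
    using potp \<open>\<epsilon> > 0\<close> unfolding POTP_def by metis
  have "\<exists>y\<in>Y. \<forall>k. dist ((f^^k) y) ((f^^(k mod N)) x) \<le> \<epsilon>"
    if x: "x \<in> Y" and N: "N \<ge> 1" and ret: "dist ((f^^N) x) x \<le> \<delta>" for x N
  proof -
    define xs where "xs i = (f^^nat (i mod int N)) x" for i
    have "\<forall>i. xs i \<in> Y" using funpow_in_invariant[OF fY x] by (simp add: xs_def)
    moreover have "\<forall>i. dist (f (xs i)) (xs (i + 1)) \<le> \<delta>"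
      using periodic_pseudo_orbit[OF N ret] by (simp add: xs_def)
    ultimately obtain y where "y \<in> Y" and y: "\<forall>i. dist (int_iter Y f i y) (xs i) \<le> \<epsilon>"
      using \<delta>(2) by blast
    have "dist ((f^^k) y) ((f^^(k mod N)) x) \<le> \<epsilon>" for k
      using y[rule_format, of "int k"] by (simp add: int_iter_def xs_def flip: of_nat_mod)
    then show ?thesis using \<open>y \<in> Y\<close> by blast
  qed
  with \<delta>(1) show thesis by (rule that)
qed

theorem corollary2:
  fixes f :: "complex \<Rightarrow> complex"
  assumes "\<exists>g. homeomorphism circle circle f g"
    and "POTP (nonwandering circle f) f"
  shows "\<exists>x\<in>circle. \<exists>n\<ge>1. (f ^^ n) x = x"
proof -
  obtain g where hom: "homeomorphism circle circle f g" using assms(1) by blast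
  then have contf: "continuous_on circle f" and fimg: "f ` circle \<subseteq> circle"
    and injf: "inj_on f circle" by (auto simp: homeomorphism_def intro: inj_on_inverseI)
  obtain F where contF: "continuous_on UNIV F" and lift: "\<And>t. f (ee t) = ee (F t)"
    using lift_exists[OF contf fimg] by blast
  consider (fixed) t where "F t = t"
    | (preserving) "strict_mono F" "\<And>t m. F (t + 2*pi* of_int m) = F t + 2*pi* of_int m"
    using lift_fixed_point_or_orientation_preserving[OF contF lift injf] by blast
  then show ?thesis
  proof cases
    case fixed
    then show ?thesis using lift[of t] by (intro bexI[of _ "ee t"] exI[of _ 1]) auto
  next
    case preserving
    obtain \<epsilon> where \<epsilon>: "\<epsilon> > 0" "\<And>x y N. x \<in> circle \<Longrightarrow> y \<in> circle \<Longrightarrow> N \<ge> 1 \<Longrightarrow>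
        dist ((f^^N) x) x \<le> \<epsilon> \<Longrightarrow> \<forall>k. dist ((f^^k) y) ((f^^(k mod N)) x) \<le> \<epsilon> \<Longrightarrow>
        \<exists>z\<in>circle. (f^^N) z = z"
      using shadowed_almost_return_periodic_point[OF contF preserving lift] by blast
    define \<Omega> where "\<Omega> = nonwandering circle f"
    have circle: "compact circle" "circle \<noteq> {}" by (auto simp: circle_def)
    have \<Omega>: "\<Omega> \<subseteq> circle" "f ` \<Omega> \<subseteq> \<Omega>" "\<Omega> \<noteq> {}"
      unfolding \<Omega>_def using nonwandering_subset nonwandering_invariant[OF contf fimg]
        nonwandering_nonempty[OF circle(1) fimg circle(2)] by blast+
    obtain \<delta> where \<delta>: "\<delta> > 0" "\<And>x N. x \<in> \<Omega> \<Longrightarrow> N \<ge> 1 \<Longrightarrow> dist ((f^^N) x) x \<le> \<delta> \<Longrightarrow>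
        \<exists>y\<in>\<Omega>. \<forall>k. dist ((f^^k) y) ((f^^(k mod N)) x) \<le> \<epsilon>"
      using POTP_shadows_almost_returns[OF assms(2)[folded \<Omega>_def] \<Omega>(2) \<epsilon>(1)] by blast
    have "min \<delta> \<epsilon> > 0" using \<delta>(1) \<epsilon>(1) by simp
    then obtain x N where x: "x \<in> \<Omega>" "N \<ge> 1" "dist ((f^^N) x) x < min \<delta> \<epsilon>"
      using almost_return[OF circle(1) fimg \<Omega>] by blast
    then obtain y where y: "y \<in> \<Omega>" "\<forall>k. dist ((f^^k) y) ((f^^(k mod N)) x) \<le> \<epsilon>"
      using \<delta>(2)[of x N] by auto
    then obtain z where "z \<in> circle" "(f^^N) z = z" using \<epsilon>(2)[of x y N] x \<Omega>(1) by auto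
    then show ?thesis using x(2) by blast
  qed
qed

end
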